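(* Let $F:[0,1]^{N}\times[0,1]\to\mathbb{R}$ be a non-constant analytic function, and let $M\in\mathbb{N}$ be such that for every $\mathbf{x}\in[0,1]^{N}$ and every $\delta>0$ the set $\mathcal{F}_{\mathbf{x},\delta}$ is a union of at most $M$ intervals. Then for all $(\epsilon,\delta)\in A$ and all $\mathbf{x}\in\Sigma_{\epsilon}$, \[ 1-\left|\mathcal{F}_{\mathbf{x},\delta}\right|\leq\epsilon(M+1). \]
   Context: $\mathcal{F}_{\mathbf{x},\delta}=\{t\in[0,1]:|F(\mathbf{x},t)|\geq\delta\}$; $|\cdot|$ is Lebesgue measure. $\Sigma=\{\mathbf{x}\in[0,1]^{N}:F(\mathbf{x},t)=0\ \forall t\in[0,1]\}$, $\Sigma_{\epsilon}=\{\mathbf{x}\in[0,1]^{N}:\operatorname{dist}(\mathbf{x},\Sigma)\geq\epsilon\}$ (with $\Sigma_\epsilon=[0,1]^N$ if $\Sigma=\emptyset$). $A=\{(\epsilon,\delta)\in(0,1]^{2}:\ \forall\mathbf{x}\in\Sigma_{\epsilon},\ \forall\xi\in[0,1],\ (\xi-\tfrac{\epsilon}{2},\xi+\tfrac{\epsilon}{2})\cap\mathcal{F}_{\mathbf{x},\delta}\neq\emptyset\}$. *)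

theory Defs
  imports "HOL-Analysis.Analysis"
begin

definition unit_cube :: "(real^'n) set" where
  "unit_cube = {x. \<forall>i. 0 \<le> x $ i \<and> x $ i \<le> 1}"

text \<open>Real-analytic functions on a Euclidean space: locally given by an
(unconditionally, i.e. absolutely) convergent multivariate power series,
with coordinates taken along the standard basis.\<close>
definition real_analytic_on_open :: "('a::euclidean_space \<Rightarrow> real) \<Rightarrow> 'a set \<Rightarrow> bool" where
  "real_analytic_on_open G U \<longleftrightarrow>
     (\<forall>p\<in>U. \<exists>r>0. \<exists>c :: ('a \<Rightarrow> nat) \<Rightarrow> real.
        \<forall>y\<in>ball p r.
          ((\<lambda>\<alpha>. c \<alpha> * (\<Prod>b\<in>Basis. ((y - p) \<bullet> b) ^ (\<alpha> b))) has_sum G y)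
            {\<alpha>. \<forall>b. b \<notin> Basis \<longrightarrow> \<alpha> b = 0})"

text \<open>Analytic on an arbitrary (e.g. closed) set S: the restriction to S of a
function analytic on an open neighbourhood of S.\<close>
definition real_analytic_on :: "('a::euclidean_space \<Rightarrow> real) \<Rightarrow> 'a set \<Rightarrow> bool" where
  "real_analytic_on F S \<longleftrightarrow>
     (\<exists>G U. open U \<and> S \<subseteq> U \<and> (\<forall>z\<in>S. G z = F z) \<and> real_analytic_on_open G U)"

definition Fset :: "((real^'n) \<times> real \<Rightarrow> real) \<Rightarrow> real^'n \<Rightarrow> real \<Rightarrow> real set" where
  "Fset F x \<delta> = {t \<in> {0..1}. \<bar>F (x, t)\<bar> \<ge> \<delta>}"

text \<open>S is a union of at most M intervals (intervals may be empty or degenerate).\<close>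
definition union_of_at_most_intervals :: "nat \<Rightarrow> real set \<Rightarrow> bool" where
  "union_of_at_most_intervals M S \<longleftrightarrow>
     (\<exists>I :: nat \<Rightarrow> real set. (\<forall>j<M. is_interval (I j)) \<and> S = (\<Union>j<M. I j))"

definition Sigma0 :: "((real^'n) \<times> real \<Rightarrow> real) \<Rightarrow> (real^'n) set" where
  "Sigma0 F = {x \<in> unit_cube. \<forall>t\<in>{0..1}. F (x, t) = 0}"

definition Sigma_eps :: "((real^'n) \<times> real \<Rightarrow> real) \<Rightarrow> real \<Rightarrow> (real^'n) set" where
  "Sigma_eps F \<epsilon> =
     (if Sigma0 F = {} then unit_cube
      else {x \<in> unit_cube. infdist x (Sigma0 F) \<ge> \<epsilon>})"

definition Aset :: "((real^'n) \<times> real \<Rightarrow> real) \<Rightarrow> (real \<times> real) set" where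
  "Aset F = {(\<epsilon>, \<delta>). 0 < \<epsilon> \<and> \<epsilon> \<le> 1 \<and> 0 < \<delta> \<and> \<delta> \<le> 1 \<and>
      (\<forall>x\<in>Sigma_eps F \<epsilon>. \<forall>\<xi>\<in>{0..1}.
         {\<xi> - \<epsilon>/2 <..< \<xi> + \<epsilon>/2} \<inter> Fset F x \<delta> \<noteq> {})}"

end

theory Submission
  imports Defs
begin

text \<open>Write S for F_{x,\<delta>} and T = [0,1] - S. If |T| > (M+1)\<epsilon>, choosing points greedily
from the left, each beyond the infimum of what remains plus \<epsilon>, gives t_0 < ... < t_{M+1}
in T with consecutive ones at least \<epsilon> apart. The \<epsilon>-interval around each midpoint
(t_i + t_{i+1})/2 meets S, which yields points t_i < s_i < t_{i+1} of S. Two of these M+1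
points lie in the same one of the M intervals making up S, and that interval then contains
some t_j: a contradiction.\<close>

lemma union_of_at_most_intervals_sets_lebesgue:
  assumes "union_of_at_most_intervals M S"
  shows "S \<in> sets lebesgue"
proof -
  obtain I where "\<forall>j<M. is_interval (I j)" and "S = (\<Union>j<M. I j)"
    using assms unfolding union_of_at_most_intervals_def by blast
  then show ?thesis
    by (auto intro!: sets.finite_UN sets_completionI_sets real_interval_borel_measurable)
qed

lemma measure_gt_imp_separated_chain:
  fixes T :: "real set"
  assumes "T \<in> sets lebesgue" "bounded T" "\<epsilon> > 0" "measure lebesgue T > real k * \<epsilon>"
  shows "\<exists>t. (\<forall>i\<le>k. t i \<in> T) \<and> (\<forall>i<k. t i + \<epsilon> \<le> t (Suc i))"
  using assms
proof (induction k arbitrary: T)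
  case 0
  then obtain y where "y \<in> T" by fastforce
  then show ?case by auto
next
  case (Suc k)
  define a where "a = Inf T"
  define T' where "T' = T \<inter> {a + \<epsilon><..}"
  have bdd: "bdd_below T"
    using Suc.prems(2) by (rule bounded_imp_bdd_below)
  have T_lmeasurable: "T \<in> lmeasurable"
    using Suc.prems(1,2) by (rule bounded_set_imp_lmeasurable[rotated])
  have T'_lmeasurable: "T' \<in> lmeasurable"
    unfolding T'_def using T_lmeasurable by (simp add: fmeasurable_Int_fmeasurable)
  have "T \<subseteq> {a..a + \<epsilon>} \<union> T'"
    using bdd by (auto simp: a_def T'_def cInf_lower)
  then have "measure lebesgue T \<le> measure lebesgue ({a..a + \<epsilon>} \<union> T')"
    using T'_lmeasurable by (intro measure_mono_fmeasurable) (auto simp: Suc.prems(1))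
  also have "\<dots> \<le> \<epsilon> + measure lebesgue T'"
    using measure_Un_le[of "{a..a + \<epsilon>}" lebesgue T'] T'_lmeasurable Suc.prems(3) by auto
  finally have "measure lebesgue T' > real k * \<epsilon>"
    using Suc.prems(4) by (simp add: algebra_simps)
  then obtain t where t_in: "\<forall>i\<le>k. t i \<in> T'" and t_sep: "\<forall>i<k. t i + \<epsilon> \<le> t (Suc i)"
    using Suc.IH[of T'] T'_lmeasurable Suc.prems(2,3) by (auto simp: T'_def bounded_Int)
  have "T \<noteq> {}" "Inf T < t 0 - \<epsilon>"
    using t_in by (auto simp: a_def T'_def)
  then obtain t0 where t0: "t0 \<in> T" "t0 + \<epsilon> < t 0"
    using cInf_less_iff[OF _ bdd] by fastforce
  define u where "u i = (case i of 0 \<Rightarrow> t0 | Suc j \<Rightarrow> t j)" for i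
  have "\<forall>i\<le>Suc k. u i \<in> T"
    using t_in t0 by (auto simp: u_def T'_def split: nat.split)
  moreover have "\<forall>i<Suc k. u i + \<epsilon> \<le> u (Suc i)"
    using t_sep t0 by (auto simp: u_def split: nat.split)
  ultimately show ?case by blast
qed

lemma exists_between_separated_points:
  fixes S :: "real set"
  assumes dense: "\<forall>\<xi>\<in>{a..b}. {\<xi> - \<epsilon>/2 <..< \<xi> + \<epsilon>/2} \<inter> S \<noteq> {}"
    and "t \<in> {a..b}" "t' \<in> {a..b}" "t + \<epsilon> \<le> t'"
  shows "\<exists>s\<in>S. t < s \<and> s < t'"
proof -
  have "(t + t') / 2 \<in> {a..b}"
    using assms(2,3) by auto
  with dense obtain s where "s \<in> S" "s \<in> {(t + t') / 2 - \<epsilon>/2 <..< (t + t') / 2 + \<epsilon>/2}"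
    by blast
  moreover from this(2) assms(4) have "t < s \<and> s < t'"
    by (simp add: field_simps)
  ultimately show ?thesis
    by blast
qed

lemma union_of_intervals_no_alternation:
  fixes I :: "nat \<Rightarrow> real set" and s t :: "nat \<Rightarrow> real"
  assumes intervals: "\<forall>j<M. is_interval (I j)"
    and s_in: "\<forall>i\<le>M. s i \<in> (\<Union>j<M. I j)"
    and between: "\<forall>i\<le>M. t i < s i \<and> s i < t (Suc i)"
    and t_notin: "\<forall>i\<le>M. t (Suc i) \<notin> (\<Union>j<M. I j)"
  shows False
proof -
  have "\<forall>i. \<exists>j. i \<le> M \<longrightarrow> j < M \<and> s i \<in> I j"
    using s_in by blast
  then obtain J where J: "\<forall>i. i \<le> M \<longrightarrow> J i < M \<and> s i \<in> I (J i)"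
    by (rule choice[THEN exE])
  have t_mono: "t n \<le> t (Suc n)" if "n \<le> M" for n
    using between that by (meson less_imp_le less_trans)
  have separated: "J i \<noteq> J i'" if "i < i'" "i' \<le> M" for i i'
  proof
    assume same: "J i = J i'"
    have "t (Suc i) \<le> t i'"
      by (rule lift_Suc_mono_le_ivl[of "{..M}"]) (use t_mono that in auto)
    moreover have "s i < t (Suc i)" "t i' < s i'"
      using between that by auto
    moreover have "s i \<in> I (J i')" "s i' \<in> I (J i')" "is_interval (I (J i'))"
      using J intervals that same[symmetric] by auto
    ultimately have "t (Suc i) \<in> I (J i')"
      unfolding is_interval_1 by (meson less_imp_le order_trans)
    then show False
      using t_notin J that by auto
  qed
  have "inj_on J {..M}"
  proof (rule inj_onI)
    fix i i' assume "i \<in> {..M}" "i' \<in> {..M}" "J i = J i'"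
    then show "i = i'"
      by (cases i i' rule: linorder_cases) (auto dest: separated)
  qed
  then have "card {..M} \<le> card {..<M}"
    using J by (intro card_inj_on_le) auto
  then show False
    by simp
qed

lemma measure_complement_dense_union_of_intervals_le:
  fixes S :: "real set"
  assumes union: "union_of_at_most_intervals M S" and "\<epsilon> > 0"
    and dense: "\<forall>\<xi>\<in>{a..b}. {\<xi> - \<epsilon>/2 <..< \<xi> + \<epsilon>/2} \<inter> S \<noteq> {}"
  shows "measure lebesgue ({a..b} - S) \<le> \<epsilon> * (real M + 1)"
proof (rule ccontr)
  assume too_large: "\<not> measure lebesgue ({a..b} - S) \<le> \<epsilon> * (real M + 1)"
  obtain I where intervals: "\<forall>j<M. is_interval (I j)" and S: "S = (\<Union>j<M. I j)"
    using union unfolding union_of_at_most_intervals_def by blast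
  define T where "T = {a..b} - S"
  have "measure lebesgue T > real (Suc M) * \<epsilon>"
    using too_large by (simp add: T_def algebra_simps)
  moreover have "T \<in> sets lebesgue"
    using union_of_at_most_intervals_sets_lebesgue[OF union] by (simp add: T_def sets.Diff)
  moreover have "bounded T"
    unfolding T_def by (rule bounded_subset[of "{a..b}"]) auto
  ultimately obtain t where t_in: "\<forall>i\<le>Suc M. t i \<in> T" and t_sep: "\<forall>i<Suc M. t i + \<epsilon> \<le> t (Suc i)"
    using measure_gt_imp_separated_chain \<open>\<epsilon> > 0\<close> by blast
  have "\<forall>i\<le>M. \<exists>s\<in>S. t i < s \<and> s < t (Suc i)"
    using t_in t_sep by (auto simp: T_def intro!: exists_between_separated_points[OF dense])
  then obtain s where "\<forall>i\<le>M. s i \<in> S \<and> t i < s i \<and> s i < t (Suc i)"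
    by metis
  moreover have "\<forall>i\<le>M. t (Suc i) \<notin> S"
    using t_in by (auto simp: T_def)
  ultimately show False
    using union_of_intervals_no_alternation[OF intervals, of s t] S by blast
qed

theorem lemma2p2:
  fixes F :: "(real^'n) \<times> real \<Rightarrow> real" and M :: nat
  assumes analytic: "real_analytic_on F (unit_cube \<times> {0..1})"
    and nonconst: "\<exists>z1\<in>unit_cube \<times> {0..1}. \<exists>z2\<in>unit_cube \<times> {0..1}. F z1 \<noteq> F z2"
    and intervals: "\<forall>x\<in>unit_cube. \<forall>\<delta>>0. union_of_at_most_intervals M (Fset F x \<delta>)"
  shows "\<forall>(\<epsilon>, \<delta>)\<in>Aset F. \<forall>x\<in>Sigma_eps F \<epsilon>.
           1 - measure lebesgue (Fset F x \<delta>) \<le> \<epsilon> * (real M + 1)"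
proof clarify
  fix \<epsilon> \<delta> x
  assume A: "(\<epsilon>, \<delta>) \<in> Aset F" and x: "x \<in> Sigma_eps F \<epsilon>"
  define S where "S = Fset F x \<delta>"
  have "\<epsilon> > 0" "\<delta> > 0"
    using A by (simp_all add: Aset_def)
  have dense: "\<forall>\<xi>\<in>{0..1}. {\<xi> - \<epsilon>/2 <..< \<xi> + \<epsilon>/2} \<inter> S \<noteq> {}"
    using A x unfolding Aset_def S_def mem_Collect_eq case_prod_conv by blast
  have "x \<in> unit_cube"
    using x unfolding Sigma_eps_def by (auto split: if_splits)
  then have union: "union_of_at_most_intervals M S"
    using intervals \<open>\<delta> > 0\<close> unfolding S_def by blast
  have "S \<subseteq> {0..1}"
    unfolding S_def Fset_def by auto
  then have "1 - measure lebesgue S = measure lebesgue ({0..1} - S)"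
    using union_of_at_most_intervals_sets_lebesgue[OF union] by (simp add: measure_Diff)
  also have "\<dots> \<le> \<epsilon> * (real M + 1)"
    using measure_complement_dense_union_of_intervals_le[OF union \<open>\<epsilon> > 0\<close> dense] .
  finally show "1 - measure lebesgue (Fset F x \<delta>) \<le> \<epsilon> * (real M + 1)"
    unfolding S_def .
qed

end
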